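(* Let $G$ be a connected $(2K_2, K_1+C_4)$-free graph. Then either $G$ is a pseudo-split graph, or there exists a partition $(V_1,\dots,V_6)$ of $V(G)$ (parts possibly empty) such that $V_i$ is an independent set for each $i\in\{2,\dots,6\}$, and moreover one of the following holds: (a) $G[V_1]$ is a pseudo-split graph with $\omega(G[V_1])\le \omega(G)-1$, and $V_5=V_6=\emptyset$; or (b) $G[V_1]$ is isomorphic to the complement of a bipartite graph.
   Context: All graphs are finite, simple and undirected. $C_n$, $K_n$ denote the cycle and complete graph on $n$ vertices; $2K_2$ is the disjoint union of two copies of $K_2$; $G_1+G_2$ denotes the join (disjoint union plus all edges between them), so $K_1+C_4$ is the wheel with a center adjacent to all vertices of a $4$-cycle. A graph is $\mathcal F$-free if it has no induced subgraph isomorphic to a member of $\mathcal F$. A pseudo-split graph is a $(2K_2, C_4)$-free graph. $G[S]$ is the subgraph induced by $S$; $\omega$ denotes clique number. *)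

theory Defs
  imports Main
begin

definition graph :: "'a set \<Rightarrow> ('a \<Rightarrow> 'a \<Rightarrow> bool) \<Rightarrow> bool" where
  "graph V E \<longleftrightarrow> finite V \<and> (\<forall>x y. E x y \<longrightarrow> x \<in> V \<and> y \<in> V)
     \<and> (\<forall>x y. E x y \<longrightarrow> E y x) \<and> (\<forall>x. \<not> E x x)"

definition induced_edges :: "('a \<Rightarrow> 'a \<Rightarrow> bool) \<Rightarrow> 'a set \<Rightarrow> 'a \<Rightarrow> 'a \<Rightarrow> bool" where
  "induced_edges E S = (\<lambda>x y. E x y \<and> x \<in> S \<and> y \<in> S)"

definition has_induced :: "'b set \<Rightarrow> ('b \<Rightarrow> 'b \<Rightarrow> bool) \<Rightarrow> 'a set \<Rightarrow> ('a \<Rightarrow> 'a \<Rightarrow> bool) \<Rightarrow> bool" where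
  "has_induced HV HE V E \<longleftrightarrow> (\<exists>f. inj_on f HV \<and> f ` HV \<subseteq> V \<and>
      (\<forall>x\<in>HV. \<forall>y\<in>HV. E (f x) (f y) \<longleftrightarrow> HE x y))"

definition twoK2_V :: "nat set" where "twoK2_V = {0,1,2,3}"
definition twoK2_E :: "nat \<Rightarrow> nat \<Rightarrow> bool" where
  "twoK2_E x y \<longleftrightarrow> {x,y} = {0,1} \<or> {x,y} = {2,3}"

definition C4_V :: "nat set" where "C4_V = {0,1,2,3}"
definition C4_E :: "nat \<Rightarrow> nat \<Rightarrow> bool" where
  "C4_E x y \<longleftrightarrow> {x,y} = {0,1} \<or> {x,y} = {1,2} \<or> {x,y} = {2,3} \<or> {x,y} = {3,0}"

text \<open>K1 + C4: the wheel, centre 4 joined to the 4-cycle 0-1-2-3-0.\<close>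
definition W4_V :: "nat set" where "W4_V = {0,1,2,3,4}"
definition W4_E :: "nat \<Rightarrow> nat \<Rightarrow> bool" where
  "W4_E x y \<longleftrightarrow> C4_E x y \<or> (x = 4 \<and> y \<in> {0,1,2,3}) \<or> (y = 4 \<and> x \<in> {0,1,2,3})"

definition pseudo_split :: "'a set \<Rightarrow> ('a \<Rightarrow> 'a \<Rightarrow> bool) \<Rightarrow> bool" where
  "pseudo_split V E \<longleftrightarrow> \<not> has_induced twoK2_V twoK2_E V E \<and> \<not> has_induced C4_V C4_E V E"

definition connected_graph :: "'a set \<Rightarrow> ('a \<Rightarrow> 'a \<Rightarrow> bool) \<Rightarrow> bool" where
  "connected_graph V E \<longleftrightarrow> V \<noteq> {} \<and> (\<forall>u\<in>V. \<forall>v\<in>V. E\<^sup>*\<^sup>* u v)"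

definition clique :: "('a \<Rightarrow> 'a \<Rightarrow> bool) \<Rightarrow> 'a set \<Rightarrow> bool" where
  "clique E K \<longleftrightarrow> (\<forall>x\<in>K. \<forall>y\<in>K. x \<noteq> y \<longrightarrow> E x y)"

definition independent :: "('a \<Rightarrow> 'a \<Rightarrow> bool) \<Rightarrow> 'a set \<Rightarrow> bool" where
  "independent E S \<longleftrightarrow> (\<forall>x\<in>S. \<forall>y\<in>S. \<not> E x y)"

definition clique_number :: "'a set \<Rightarrow> ('a \<Rightarrow> 'a \<Rightarrow> bool) \<Rightarrow> nat" where
  "clique_number V E = Max {card K | K. K \<subseteq> V \<and> clique E K}"

definition complement :: "'a set \<Rightarrow> ('a \<Rightarrow> 'a \<Rightarrow> bool) \<Rightarrow> 'a \<Rightarrow> 'a \<Rightarrow> bool" where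
  "complement V E = (\<lambda>x y. x \<in> V \<and> y \<in> V \<and> x \<noteq> y \<and> \<not> E x y)"

definition bipartite :: "'a set \<Rightarrow> ('a \<Rightarrow> 'a \<Rightarrow> bool) \<Rightarrow> bool" where
  "bipartite V E \<longleftrightarrow> (\<exists>A B. A \<union> B = V \<and> A \<inter> B = {} \<and> independent E A \<and> independent E B)"

end

theory Submission
  imports Defs "HOL-Library.Disjoint_Sets"
begin

text \<open>
  In a \<open>(2K\<^sub>2, K\<^sub>1 + C\<^sub>4)\<close>-free graph every neighbourhood induces a pseudo-split graph,
  and a pseudo-split graph is covered by a maximum clique \<open>K\<close> and two independent sets:
  the vertices outside \<open>K\<close> missing exactly one vertex of \<open>K\<close>, and those missing at least two.
  Freeness of \<open>C\<^sub>4\<close> makes the sets of missed vertices of adjacent vertices nested,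
  freeness of \<open>2K\<^sub>2\<close> forbids two common missed vertices, and maximality of \<open>K\<close> forbids
  adjacent vertices missing the same single vertex.
  Now fix an edge \<open>ab\<close>: the vertices adjacent to neither \<open>a\<close> nor \<open>b\<close> are independent, so
  \<open>V\<close> is covered by two cliques and five independent sets. Making the cover disjoint gives (b),
  since the complement of a union of two cliques is bipartite.
\<close>

lemma graph_sym: "graph V E \<Longrightarrow> E x y \<Longrightarrow> E y x"
  and graph_irrefl: "graph V E \<Longrightarrow> \<not> E x x"
  and graph_edge_in: "graph V E \<Longrightarrow> E x y \<Longrightarrow> x \<in> V \<and> y \<in> V"
  unfolding graph_def by blast+

lemma graph_induced_edges: "graph V E \<Longrightarrow> S \<subseteq> V \<Longrightarrow> graph S (induced_edges E S)"
  unfolding graph_def induced_edges_def by (auto intro: finite_subset)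

lemma clique_induced_edges_iff: "K \<subseteq> S \<Longrightarrow> clique (induced_edges E S) K \<longleftrightarrow> clique E K"
  and independent_induced_edges_iff: "K \<subseteq> S \<Longrightarrow> independent (induced_edges E S) K \<longleftrightarrow> independent E K"
  unfolding clique_def independent_def induced_edges_def by blast+

lemma clique_insert_iff: "clique E (insert x S) \<longleftrightarrow> clique E S \<and> (\<forall>s\<in>S. s \<noteq> x \<longrightarrow> E x s \<and> E s x)"
  unfolding clique_def by auto

lemma clique_subset: "clique E K \<Longrightarrow> S \<subseteq> K \<Longrightarrow> clique E S"
  unfolding clique_def by blast

lemma has_induced_induced_edges:
  assumes "has_induced HV HE S (induced_edges E S)" and "S \<subseteq> V"
  shows "has_induced HV HE V E"
  using assms unfolding has_induced_def induced_edges_def by (metis image_subset_iff subset_trans)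

lemma has_induced_twoK2I:
  assumes g: "graph V E"
    and v: "x \<in> V" "y \<in> V" "z \<in> V" "w \<in> V"
    and e: "E x y" "E z w" "\<not> E x z" "\<not> E x w" "\<not> E y z" "\<not> E y w"
  shows "has_induced twoK2_V twoK2_E V E"
proof -
  note sym = graph_sym[OF g] and irr = graph_irrefl[OF g]
  define f where "f i = (if i = 0 then x else if i = 1 then y else if i = 2 then z else w)" for i :: nat
  have "x \<noteq> y" "x \<noteq> z" "x \<noteq> w" "y \<noteq> z" "y \<noteq> w" "z \<noteq> w"
    using e irr sym by metis+
  then have "inj_on f twoK2_V" unfolding inj_on_def twoK2_V_def f_def by auto
  moreover have "f ` twoK2_V \<subseteq> V" unfolding twoK2_V_def f_def using v by auto
  moreover have "\<forall>a\<in>twoK2_V. \<forall>b\<in>twoK2_V. E (f a) (f b) \<longleftrightarrow> twoK2_E a b"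
    unfolding twoK2_V_def f_def twoK2_E_def using e irr by (simp add: doubleton_eq_iff; metis sym)
  ultimately show ?thesis unfolding has_induced_def by blast
qed

lemma has_induced_C4I:
  assumes g: "graph V E"
    and v: "x \<in> V" "y \<in> V" "z \<in> V" "w \<in> V"
    and e: "E x y" "E y z" "E z w" "E w x" "\<not> E x z" "\<not> E y w" "x \<noteq> z" "y \<noteq> w"
  shows "has_induced C4_V C4_E V E"
proof -
  note sym = graph_sym[OF g] and irr = graph_irrefl[OF g]
  define f where "f i = (if i = 0 then x else if i = 1 then y else if i = 2 then z else w)" for i :: nat
  have "x \<noteq> y" "x \<noteq> w" "y \<noteq> z" "z \<noteq> w"
    using e irr by metis+
  then have "inj_on f C4_V" unfolding inj_on_def C4_V_def f_def using e by auto
  moreover have "f ` C4_V \<subseteq> V" unfolding C4_V_def f_def using v by auto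
  moreover have "\<forall>a\<in>C4_V. \<forall>b\<in>C4_V. E (f a) (f b) \<longleftrightarrow> C4_E a b"
    unfolding C4_V_def f_def C4_E_def using e irr by (simp add: doubleton_eq_iff; metis sym)
  ultimately show ?thesis unfolding has_induced_def by blast
qed

lemma has_induced_W4_of_C4_neighbourhood:
  assumes g: "graph V E" and c: "c \<in> V"
    and C4: "has_induced C4_V C4_E {x. E c x} (induced_edges E {x. E c x})"
  shows "has_induced W4_V W4_E V E"
proof -
  obtain f where inj: "inj_on f C4_V" and img: "f ` C4_V \<subseteq> {x. E c x}"
    and edges: "\<forall>a\<in>C4_V. \<forall>b\<in>C4_V. induced_edges E {x. E c x} (f a) (f b) \<longleftrightarrow> C4_E a b"
    using C4 unfolding has_induced_def by blast
  define f' where "f' = f(4 := c)"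
  have W4_V: "W4_V = insert 4 C4_V" and "4 \<notin> C4_V" unfolding W4_V_def C4_V_def by auto
  have c_out: "c \<notin> f ` C4_V" using img graph_irrefl[OF g] by blast
  have "inj_on f' W4_V" unfolding W4_V f'_def using inj c_out \<open>4 \<notin> C4_V\<close>
    by (auto simp: inj_on_def)
  moreover have "f' ` W4_V \<subseteq> V" unfolding W4_V f'_def using c img graph_edge_in[OF g] by auto
  moreover have "E (f' a) (f' b) \<longleftrightarrow> W4_E a b" if ab: "a \<in> W4_V" "b \<in> W4_V" for a b
  proof -
    have f'_C4: "f' i = f i" if "i \<in> C4_V" for i
      using that \<open>4 \<notin> C4_V\<close> unfolding f'_def by auto
    have W4_E_C4: "W4_E i 4" "W4_E 4 i" if "i \<in> C4_V" for i
      using that unfolding W4_E_def C4_V_def by auto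
    have "\<not> W4_E 4 4" unfolding W4_E_def C4_E_def by (simp add: doubleton_eq_iff)
    consider "a \<in> C4_V" "b \<in> C4_V" | "a = 4" "b = 4" | "a = 4" "b \<in> C4_V" | "a \<in> C4_V" "b = 4"
      using ab unfolding W4_V by blast
    then show ?thesis
    proof cases
      case 1
      then have "W4_E a b \<longleftrightarrow> C4_E a b" using \<open>4 \<notin> C4_V\<close> unfolding W4_E_def by auto
      moreover have "f a \<in> {x. E c x}" "f b \<in> {x. E c x}" using 1 img by blast+
      moreover have "induced_edges E {x. E c x} (f a) (f b) \<longleftrightarrow> C4_E a b" using 1 edges by blast
      ultimately show ?thesis using 1 f'_C4 unfolding induced_edges_def by simp
    next
      case 2
      then show ?thesis using graph_irrefl[OF g] \<open>\<not> W4_E 4 4\<close> unfolding f'_def by simp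
    next
      case 3
      then show ?thesis using img W4_E_C4 f'_C4 unfolding f'_def by auto
    next
      case 4
      then have "E (f a) c" using img graph_sym[OF g] by blast
      then show ?thesis using 4 W4_E_C4 f'_C4 unfolding f'_def by auto
    qed
  qed
  ultimately show ?thesis unfolding has_induced_def by blast
qed

lemma pseudo_split_neighbourhood:
  assumes g: "graph V E" and c: "c \<in> V"
    and no_2K2: "\<not> has_induced twoK2_V twoK2_E V E" and no_W4: "\<not> has_induced W4_V W4_E V E"
  shows "pseudo_split {x. E c x} (induced_edges E {x. E c x})"
  unfolding pseudo_split_def
proof
  have "{x. E c x} \<subseteq> V" using graph_edge_in[OF g] by blast
  then show "\<not> has_induced twoK2_V twoK2_E {x. E c x} (induced_edges E {x. E c x})"
    using no_2K2 has_induced_induced_edges by metis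
  show "\<not> has_induced C4_V C4_E {x. E c x} (induced_edges E {x. E c x})"
    using no_W4 has_induced_W4_of_C4_neighbourhood[OF g c] by blast
qed

definition non_nbrs_in :: "('a \<Rightarrow> 'a \<Rightarrow> bool) \<Rightarrow> 'a set \<Rightarrow> 'a \<Rightarrow> 'a set" where
  "non_nbrs_in E K x = {k \<in> K. \<not> E x k}"

definition maximum_clique :: "'a set \<Rightarrow> ('a \<Rightarrow> 'a \<Rightarrow> bool) \<Rightarrow> 'a set \<Rightarrow> bool" where
  "maximum_clique V E K \<longleftrightarrow>
     K \<subseteq> V \<and> clique E K \<and> (\<forall>K'. K' \<subseteq> V \<longrightarrow> clique E K' \<longrightarrow> card K' \<le> card K)"

lemma maximum_clique_exists:
  assumes "finite V"
  shows "\<exists>K. maximum_clique V E K"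
proof -
  have bound: "\<forall>K. K \<subseteq> V \<and> clique E K \<longrightarrow> card K < Suc (card V)"
    using assms card_mono le_imp_less_Suc by blast
  have "{} \<subseteq> V \<and> clique E {}" unfolding clique_def by simp
  from ex_has_greatest_nat[of "\<lambda>K. K \<subseteq> V \<and> clique E K", OF this bound] show ?thesis
    unfolding maximum_clique_def by blast
qed

locale pseudo_split_max_clique =
  fixes V :: "'a set" and E :: "'a \<Rightarrow> 'a \<Rightarrow> bool" and K :: "'a set"
  assumes g: "graph V E" and ps: "pseudo_split V E" and max: "maximum_clique V E K"
begin

lemma K: "K \<subseteq> V" "clique E K"
  and K_max: "K' \<subseteq> V \<Longrightarrow> clique E K' \<Longrightarrow> card K' \<le> card K"
  using max unfolding maximum_clique_def by blast+

lemma finite_K: "finite K"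
  using K(1) g finite_subset unfolding graph_def by blast

lemma non_nbrs_in_nonempty:
  assumes x: "x \<in> V - K"
  shows "non_nbrs_in E K x \<noteq> {}"
proof
  assume "non_nbrs_in E K x = {}"
  then have "clique E (insert x K)"
    using K(2) graph_sym[OF g] unfolding non_nbrs_in_def clique_def by blast
  then have "card (insert x K) \<le> card K" using K_max K(1) x by blast
  then show False using x finite_K by simp
qed

lemma non_nbrs_in_nested:
  assumes x: "x \<in> V - K" and y: "y \<in> V - K" and xy: "E x y"
  shows "non_nbrs_in E K x \<subseteq> non_nbrs_in E K y \<or> non_nbrs_in E K y \<subseteq> non_nbrs_in E K x"
proof (rule ccontr)
  assume "\<not> ?thesis"
  then obtain kx ky where k: "kx \<in> K" "ky \<in> K"
    and e: "\<not> E x kx" "\<not> E y ky" "E y kx" "E x ky"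
    unfolding non_nbrs_in_def by blast
  have "E kx ky" using k e K(2) unfolding clique_def by metis
  have "E ky x" using e(4) graph_sym[OF g] by blast
  have "has_induced C4_V C4_E V E"
    by (rule has_induced_C4I[OF g, of x y kx ky])
      (use x y k e xy K(1) \<open>E kx ky\<close> \<open>E ky x\<close> in \<open>auto\<close>)
  then show False using ps unfolding pseudo_split_def by blast
qed

lemma non_nbrs_in_common_unique:
  assumes x: "x \<in> V - K" and y: "y \<in> V - K" and xy: "E x y"
    and k: "k \<in> non_nbrs_in E K x \<inter> non_nbrs_in E K y" "k' \<in> non_nbrs_in E K x \<inter> non_nbrs_in E K y"
  shows "k = k'"
proof (rule ccontr)
  assume "k \<noteq> k'"
  then have "E k k'" using k K(2) unfolding non_nbrs_in_def clique_def by blast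
  have "has_induced twoK2_V twoK2_E V E"
    by (rule has_induced_twoK2I[OF g, of x y k k'])
      (use x y k xy K(1) \<open>E k k'\<close> in \<open>auto simp: non_nbrs_in_def\<close>)
  then show False using ps unfolding pseudo_split_def by blast
qed

lemma independent_single_non_nbr:
  "independent E {x \<in> V - K. \<exists>k. non_nbrs_in E K x = {k}}"
  unfolding independent_def
proof (intro ballI notI)
  fix x y
  assume "x \<in> {x \<in> V - K. \<exists>k. non_nbrs_in E K x = {k}}" "y \<in> {x \<in> V - K. \<exists>k. non_nbrs_in E K x = {k}}"
    and xy: "E x y"
  then obtain k k' where x: "x \<in> V - K" and y: "y \<in> V - K"
    and kx: "non_nbrs_in E K x = {k}" and ky: "non_nbrs_in E K y = {k'}" by blast
  have "k = k'" using non_nbrs_in_nested[OF x y xy] kx ky by auto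
  have "k \<in> K" using kx unfolding non_nbrs_in_def by blast
  have adj: "E x j" "E y j" if "j \<in> K - {k}" for j
    using that kx ky \<open>k = k'\<close> unfolding non_nbrs_in_def by blast+
  \<comment> \<open>Swapping k for the edge xy would enlarge the maximum clique.\<close>
  have bigger: "clique E (insert x (insert y (K - {k})))"
    using K(2) adj xy
    by (simp add: clique_insert_iff clique_subset) (blast intro: graph_sym[OF g])
  have "x \<noteq> y" using xy graph_irrefl[OF g] by blast
  have "card (insert x (insert y (K - {k}))) \<le> card K"
    by (rule K_max[OF _ bigger]) (use x y K(1) in blast)
  moreover have "card (insert x (insert y (K - {k}))) = Suc (card K)"
    using finite_K \<open>k \<in> K\<close> x y \<open>x \<noteq> y\<close>
    by (simp add: card_Diff_singleton) (metis Suc_pred card_gt_0_iff empty_iff)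
  ultimately show False by simp
qed

lemma independent_several_non_nbrs:
  "independent E {x \<in> V - K. \<nexists>k. non_nbrs_in E K x = {k}}"
  unfolding independent_def
proof (intro ballI notI)
  fix x y
  assume "x \<in> {x \<in> V - K. \<nexists>k. non_nbrs_in E K x = {k}}" "y \<in> {x \<in> V - K. \<nexists>k. non_nbrs_in E K x = {k}}"
    and xy: "E x y"
  then have x: "x \<in> V - K" and y: "y \<in> V - K"
    and not_single: "\<nexists>k. non_nbrs_in E K x = {k}" "\<nexists>k. non_nbrs_in E K y = {k}" by blast+
  have two: "\<exists>k k'. k \<in> non_nbrs_in E K z \<and> k' \<in> non_nbrs_in E K z \<and> k \<noteq> k'"
    if "z \<in> V - K" "\<nexists>k. non_nbrs_in E K z = {k}" for z
    using non_nbrs_in_nonempty[OF that(1)] that(2) by blast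
  from non_nbrs_in_nested[OF x y xy] show False
  proof
    assume "non_nbrs_in E K x \<subseteq> non_nbrs_in E K y"
    then show False
      using two[OF x not_single(1)] non_nbrs_in_common_unique[OF x y xy] by blast
  next
    assume "non_nbrs_in E K y \<subseteq> non_nbrs_in E K x"
    then show False
      using two[OF y not_single(2)] non_nbrs_in_common_unique[OF x y xy] by blast
  qed
qed

end

lemma pseudo_split_cover:
  assumes g: "graph V E" and ps: "pseudo_split V E"
  obtains K I J where "V = K \<union> I \<union> J" "clique E K" "independent E I" "independent E J"
proof -
  have "finite V" using g unfolding graph_def by blast
  then obtain K where "maximum_clique V E K" using maximum_clique_exists by blast
  then interpret pseudo_split_max_clique V E K using g ps by unfold_locales
  have "V = K \<union> {x \<in> V - K. \<exists>k. non_nbrs_in E K x = {k}} \<union> {x \<in> V - K. \<nexists>k. non_nbrs_in E K x = {k}}"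
    using K(1) by blast
  then show thesis using that K(2) independent_single_non_nbr independent_several_non_nbrs by blast
qed

lemma neighbourhood_cover:
  assumes g: "graph V E" and c: "c \<in> V"
    and no_2K2: "\<not> has_induced twoK2_V twoK2_E V E" and no_W4: "\<not> has_induced W4_V W4_E V E"
  obtains K I J where "{x. E c x} = K \<union> I \<union> J" "clique E K" "independent E I" "independent E J"
proof -
  let ?N = "{x. E c x}"
  have N: "?N \<subseteq> V" using graph_edge_in[OF g] by blast
  obtain K I J where cover: "?N = K \<union> I \<union> J" and "clique (induced_edges E ?N) K"
    and "independent (induced_edges E ?N) I" "independent (induced_edges E ?N) J"
    using pseudo_split_cover[OF graph_induced_edges[OF g N] pseudo_split_neighbourhood[OF assms]] .
  moreover have "K \<subseteq> ?N" "I \<subseteq> ?N" "J \<subseteq> ?N" using cover by blast+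
  ultimately have "clique E K" "independent E I" "independent E J"
    using clique_induced_edges_iff independent_induced_edges_iff by blast+
  with cover show thesis by (rule that)
qed

lemma independent_outside_edge_neighbourhoods:
  assumes g: "graph V E" and no_2K2: "\<not> has_induced twoK2_V twoK2_E V E" and ab: "E a b"
  shows "independent E (V - {x. E a x} - {x. E b x})"
  unfolding independent_def
proof (intro ballI notI)
  fix x y assume x: "x \<in> V - {x. E a x} - {x. E b x}" and y: "y \<in> V - {x. E a x} - {x. E b x}"
    and xy: "E x y"
  have "\<not> E x a" "\<not> E x b" "\<not> E y a" "\<not> E y b" using x y graph_sym[OF g] by blast+
  moreover have "a \<in> V" "b \<in> V" using graph_edge_in[OF g ab] by blast+
  ultimately have "has_induced twoK2_V twoK2_E V E"
    using x y by (intro has_induced_twoK2I[OF g _ _ _ _ xy ab]) auto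
  then show False using no_2K2 by blast
qed

lemma two_cliques_five_independent_cover:
  assumes g: "graph V E"
    and no_2K2: "\<not> has_induced twoK2_V twoK2_E V E" and no_W4: "\<not> has_induced W4_V W4_E V E"
  obtains K1 K2 and A :: "nat \<Rightarrow> 'a set" where "(\<Union>i\<in>{1..6}. A i) = V" "A 1 = K1 \<union> K2" "clique E K1" "clique E K2"
    "\<forall>i\<in>{2..6}. independent E (A i)"
proof (cases "\<exists>a b. E a b")
  case False
  define A where "A = (\<lambda>i :: nat. if i = 2 then V else {})"
  have "(\<Union>i\<in>{1..6}. A i) = V" unfolding A_def by force
  moreover have "clique E {}" "\<forall>i\<in>{2..6}. independent E (A i)"
    using False unfolding A_def clique_def independent_def by auto
  ultimately show thesis using that[of A "{}" "{}"] unfolding A_def by simp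
next
  case True
  then obtain a b where ab: "E a b" by blast
  have "a \<in> V" "b \<in> V" using graph_edge_in[OF g ab] by blast+
  obtain K1 I1 J1 where Na: "{x. E a x} = K1 \<union> I1 \<union> J1" "clique E K1" "independent E I1" "independent E J1"
    using neighbourhood_cover[OF g \<open>a \<in> V\<close> no_2K2 no_W4] .
  obtain K2 I2 J2 where Nb: "{x. E b x} = K2 \<union> I2 \<union> J2" "clique E K2" "independent E I2" "independent E J2"
    using neighbourhood_cover[OF g \<open>b \<in> V\<close> no_2K2 no_W4] .
  define R where "R = V - {x. E a x} - {x. E b x}"
  define A where "A = (\<lambda>i :: nat. if i = 1 then K1 \<union> K2 else if i = 2 then I1 else if i = 3 then J1
                                   else if i = 4 then I2 else if i = 5 then J2 else R)"
  have "{1..6 :: nat} = {1, 2, 3, 4, 5, 6}" by auto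
  then have "(\<Union>i\<in>{1..6}. A i) = K1 \<union> K2 \<union> I1 \<union> J1 \<union> I2 \<union> J2 \<union> R" unfolding A_def by auto
  also have "\<dots> = V"
    using Na(1) Nb(1) graph_edge_in[OF g] unfolding R_def by blast
  finally have "(\<Union>i\<in>{1..6}. A i) = V" .
  moreover have "\<forall>i\<in>{2..6}. independent E (A i)"
    using Na(3,4) Nb(3,4) independent_outside_edge_neighbourhoods[OF g no_2K2 ab]
    unfolding A_def R_def by auto
  moreover have "A 1 = K1 \<union> K2" unfolding A_def by simp
  ultimately show thesis using that Na(2) Nb(2) by blast
qed

lemma bipartite_complement_Un_cliques:
  assumes "clique E K1" and "clique E K2"
  shows "bipartite (K1 \<union> K2) (complement (K1 \<union> K2) (induced_edges E (K1 \<union> K2)))"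
  unfolding bipartite_def
proof (intro exI conjI)
  show "K1 \<union> (K2 - K1) = K1 \<union> K2" "K1 \<inter> (K2 - K1) = {}" by blast+
  show "independent (complement (K1 \<union> K2) (induced_edges E (K1 \<union> K2))) K1"
    "independent (complement (K1 \<union> K2) (induced_edges E (K1 \<union> K2))) (K2 - K1)"
    using assms unfolding independent_def complement_def induced_edges_def clique_def by auto
qed

lemma partition_of_cover:
  fixes A :: "nat \<Rightarrow> 'a set"
  assumes "(\<Union>i\<in>{1..n}. A i) = V"
  obtains P where "(\<Union>i\<in>{1..n}. P i) = V" "\<forall>i\<in>{1..n}. \<forall>j\<in>{1..n}. i \<noteq> j \<longrightarrow> P i \<inter> P j = {}"
    "\<forall>i. P i \<subseteq> A i" "P 1 = A 1"
proof
  let ?A = "A(0 := {})"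
  have split: "{0..<Suc n} = insert 0 {1..n}" by auto
  have "(\<Union>i\<in>{1..n}. disjointed ?A i) = (\<Union>i\<in>{0..<Suc n}. disjointed ?A i)"
    by (simp only: split UN_insert disjointed_0 fun_upd_same Un_empty_left)
  also have "\<dots> = (\<Union>i\<in>{0..<Suc n}. ?A i)" by (rule finite_UN_disjointed_eq)
  also have "\<dots> = ?A 0 \<union> (\<Union>i\<in>{1..n}. ?A i)" by (simp only: split UN_insert)
  also have "\<dots> = V" using assms by auto
  finally show "(\<Union>i\<in>{1..n}. disjointed ?A i) = V" .
  show "\<forall>i\<in>{1..n}. \<forall>j\<in>{1..n}. i \<noteq> j \<longrightarrow> disjointed ?A i \<inter> disjointed ?A j = {}"
    using disjoint_family_disjointed[of ?A] unfolding disjoint_family_on_def by blast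
  show "\<forall>i. disjointed ?A i \<subseteq> A i"
    using disjointed_subset[of ?A] by (auto simp: disjointed_def split: if_splits)
  show "disjointed ?A 1 = A 1" by (simp add: disjointed_def)
qed

lemma independent_subset: "independent E I \<Longrightarrow> J \<subseteq> I \<Longrightarrow> independent E J"
  unfolding independent_def by blast

theorem theorem3p3:
  fixes V :: "'a set" and E :: "'a \<Rightarrow> 'a \<Rightarrow> bool"
  assumes "graph V E" and "connected_graph V E"
    and "\<not> has_induced twoK2_V twoK2_E V E"
    and "\<not> has_induced W4_V W4_E V E"
  shows "pseudo_split V E \<or>
    (\<exists>P :: nat \<Rightarrow> 'a set.
        (\<Union>i\<in>{1..6}. P i) = V
      \<and> (\<forall>i\<in>{1..6}. \<forall>j\<in>{1..6}. i \<noteq> j \<longrightarrow> P i \<inter> P j = {})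
      \<and> (\<forall>i\<in>{2..6}. independent E (P i))
      \<and> ((pseudo_split (P 1) (induced_edges E (P 1))
            \<and> clique_number (P 1) (induced_edges E (P 1)) \<le> clique_number V E - 1
            \<and> P 5 = {} \<and> P 6 = {})
         \<or> bipartite (P 1) (complement (P 1) (induced_edges E (P 1)))))"
proof -
  obtain K1 K2 and A :: "nat \<Rightarrow> 'a set" where cover: "(\<Union>i\<in>{1..6}. A i) = V"
    and A1: "A 1 = K1 \<union> K2"
    and cliques: "clique E K1" "clique E K2" and indep: "\<forall>i\<in>{2..6}. independent E (A i)"
    by (rule two_cliques_five_independent_cover[OF assms(1,3,4)])
  obtain P where partition: "(\<Union>i\<in>{1..6}. P i) = V"
      "\<forall>i\<in>{1..6}. \<forall>j\<in>{1..6}. i \<noteq> j \<longrightarrow> P i \<inter> P j = {}"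
    and sub: "\<forall>i. P i \<subseteq> A i" and P1: "P 1 = A 1"
    by (rule partition_of_cover[OF cover])
  have "\<forall>i\<in>{2..6}. independent E (P i)" using indep sub independent_subset by blast
  moreover have "bipartite (P 1) (complement (P 1) (induced_edges E (P 1)))"
    unfolding P1 A1 using bipartite_complement_Un_cliques[OF cliques] .
  ultimately show ?thesis using partition by (intro disjI2 exI[of _ P]) blast
qed

end
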